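(* If a sequence $G_n$ of finite random directed graphs converges in the local weak sense to the random rooted directed graph $(G,o)$, then the bipartite representations $G'_n$ converge in the local weak sense to $(G',o')$, where $G'$ is the bipartite representation of $G$ and the root $o'$ is $o^-$ or $o^+$ with probability $1/2$ each. The converse does not hold: the convergence of the sequence of bipartite representations $G'_n$ does not imply the convergence of $G_n$. In fact, there are different random directed rooted graphs $(G_1,o_1)$ and $(G_2,o_2)$, each of which is the local weak limit of a sequence of finite random graphs, such that their bipartite representations $(G'_1,o'_1)$ and $(G'_2,o'_2)$ (with roots chosen as $o_i^-$ or $o_i^+$ with probability $1/2$ each) are isomorphic as random rooted graphs.
   Context: Graphs are locally finite, possibly with multiple edges and loops. The bipartite representation of a directed graph $G=(V,E)$ is the bipartite undirected graph $G'=(V^-,V^+,E')$ with $V^-=\{v^-: v\in V\}$, $V^+=\{v^+: v\in V\}$ and $E'=\{\{v^-,w^+\}: (v,w)\in E\}$. A sequence $(G_n,o)$ of locally finite random rooted (directed) graphs converges in the local weak sense to the locally finite connected random rooted (directed) graph $(G,o)$ if for every positive integer $r$ and every finite rooted (directed) graph $(H,o)$ we have $\mathbb{P}(B_{G_n}(o,r)\simeq (H,o))\to \mathbb{P}(B_{G}(o,r)\simeq (H,o))$, where $B_G(x,r)$ is the ball of radius $r$ around $x$ in the graph metric and $\simeq$ denotes rooted isomorphism. For non-rooted finite graphs $G_n$, local weak convergence means convergence of $G_n$ with a root chosen uniformly at random among its vertices. *)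

theory Defs
  imports "HOL-Probability.Probability"
begin

text \<open>A (directed, locally finite) multigraph with loops: a vertex set together with an
  edge-multiplicity function; E v w is the number of edges from v to w.
  An undirected multigraph is represented by a symmetric multiplicity function.\<close>

type_synonym 'v graph = "'v set \<times> ('v \<Rightarrow> 'v \<Rightarrow> nat)"
type_synonym 'v rgraph = "'v graph \<times> 'v"

definition wf_graph :: "'v graph \<Rightarrow> bool" where
  "wf_graph G \<longleftrightarrow> (\<forall>v w. snd G v w > 0 \<longrightarrow> v \<in> fst G \<and> w \<in> fst G)"

definition adj :: "('v \<Rightarrow> 'v \<Rightarrow> nat) \<Rightarrow> 'v \<Rightarrow> 'v \<Rightarrow> bool" where
  "adj E v w \<longleftrightarrow> E v w > 0 \<or> E w v > 0"

definition locally_finite :: "'v graph \<Rightarrow> bool" where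
  "locally_finite G \<longleftrightarrow> (\<forall>v\<in>fst G. finite {w. adj (snd G) v w})"

fun bset :: "('v \<Rightarrow> 'v \<Rightarrow> nat) \<Rightarrow> 'v \<Rightarrow> nat \<Rightarrow> 'v set" where
  "bset E x 0 = {x}"
| "bset E x (Suc r) = bset E x r \<union> {w. \<exists>v\<in>bset E x r. adj E v w}"

definition connected_rooted :: "'v rgraph \<Rightarrow> bool" where
  "connected_rooted g \<longleftrightarrow> snd g \<in> fst (fst g) \<and> fst (fst g) = (\<Union>r. bset (snd (fst g)) (snd g) r)"

definition ball :: "'v rgraph \<Rightarrow> nat \<Rightarrow> 'v rgraph" where
  "ball g r = (let E = snd (fst g); B = bset E (snd g) r in
     ((B, \<lambda>v w. if v \<in> B \<and> w \<in> B then E v w else 0), snd g))"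

definition rooted_iso :: "'a rgraph \<Rightarrow> 'b rgraph \<Rightarrow> bool" where
  "rooted_iso g h \<longleftrightarrow> snd g \<in> fst (fst g) \<and>
     (\<exists>f. bij_betw f (fst (fst g)) (fst (fst h)) \<and> f (snd g) = snd h \<and>
          (\<forall>v\<in>fst (fst g). \<forall>w\<in>fst (fst g). snd (fst h) (f v) (f w) = snd (fst g) v w))"

definition finite_rgraph :: "nat rgraph \<Rightarrow> bool" where
  "finite_rgraph h \<longleftrightarrow> wf_graph (fst h) \<and> finite (fst (fst h)) \<and> snd h \<in> fst (fst h)"

definition random_rooted_graph :: "'v rgraph measure \<Rightarrow> bool" where
  "random_rooted_graph M \<longleftrightarrow> prob_space M \<and>
     (\<forall>g\<in>space M. wf_graph (fst g) \<and> locally_finite (fst g) \<and> connected_rooted g) \<and>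
     (\<forall>r (H::nat rgraph). {g\<in>space M. rooted_iso (ball g r) H} \<in> sets M)"

definition ball_prob :: "'v rgraph measure \<Rightarrow> nat \<Rightarrow> nat rgraph \<Rightarrow> real" where
  "ball_prob M r H = measure M {g\<in>space M. rooted_iso (ball g r) H}"

definition finite_random_graph :: "'v graph pmf \<Rightarrow> bool" where
  "finite_random_graph N \<longleftrightarrow>
     (\<forall>G\<in>set_pmf N. wf_graph G \<and> finite (fst G) \<and> fst G \<noteq> {})"

definition rooted_unif :: "'v graph pmf \<Rightarrow> 'v rgraph pmf" where
  "rooted_unif N = N \<bind> (\<lambda>G. map_pmf (\<lambda>v. (G, v)) (pmf_of_set (fst G)))"

text \<open>Local weak convergence of finite random graphs Gs n to a limit law described by
  the limiting ball probabilities L r H.\<close>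
definition lw_conv :: "(nat \<Rightarrow> 'v graph pmf) \<Rightarrow> (nat \<Rightarrow> nat rgraph \<Rightarrow> real) \<Rightarrow> bool" where
  "lw_conv Gs L \<longleftrightarrow> (\<forall>r H. finite_rgraph H \<longrightarrow>
     (\<lambda>n. measure_pmf.prob (rooted_unif (Gs n)) {g. rooted_iso (ball g r) H})
       \<longlonglongrightarrow> L r H)"

text \<open>Bipartite representation: v^- = (v, False), v^+ = (v, True).\<close>
definition bip :: "'v graph \<Rightarrow> ('v \<times> bool) graph" where
  "bip G = (fst G \<times> UNIV,
     \<lambda>a b. if \<not> snd a \<and> snd b then snd G (fst a) (fst b)
           else if snd a \<and> \<not> snd b then snd G (fst b) (fst a) else 0)"

text \<open>Ball probabilities of (G', o') with o' = o^- or o^+ with probability 1/2 each.\<close>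
definition bip_ball_prob :: "'v rgraph measure \<Rightarrow> nat \<Rightarrow> nat rgraph \<Rightarrow> real" where
  "bip_ball_prob M r H =
     (measure M {g\<in>space M. rooted_iso (ball (bip (fst g), (snd g, False)) r) H}
    + measure M {g\<in>space M. rooted_iso (ball (bip (fst g), (snd g, True)) r) H}) / 2"

end

theory Submission
  imports Defs
begin

text \<open>
  The ball of radius r around v^- or v^+ in G' is determined, up to rooted isomorphism, by the
  ball of radius r around v in G. Hence the event that the r-ball of G' around the root is
  isomorphic to H is a union of cells of the countable partition of rooted graphs by the
  isomorphism type of their r-ball. Local weak convergence of G_n gives convergence of the
  probability of every cell, and since the limit is a probability measure no mass escapes, so
  the probabilities of arbitrary unions of cells converge as well. A uniform root of G'_n is a
  uniform root of G_n together with an independent fair choice of sign, which produces the root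
  o' = o^- or o^+ with probability 1/2 each.

  For the converse, the one-vertex loop and the directed 2-cycle both have a perfect matching as
  bipartite representation. Alternating between them gives graphs whose bipartite
  representations converge although the graphs do not (the ball of radius 0 alternately has
  and lacks a loop), and the two deterministic limits differ while their bipartite
  representations agree.
\<close>

definition graph_iso :: "('a \<Rightarrow> 'b) \<Rightarrow> 'a graph \<Rightarrow> 'b graph \<Rightarrow> bool" where
  "graph_iso f G H \<longleftrightarrow> bij_betw f (fst G) (fst H) \<and>
     (\<forall>v\<in>fst G. \<forall>w\<in>fst G. snd H (f v) (f w) = snd G v w)"

lemma rooted_iso_iff_graph_iso:
  "rooted_iso (G, x) (H, y) \<longleftrightarrow> x \<in> fst G \<and> (\<exists>f. graph_iso f G H \<and> f x = y)"
  unfolding rooted_iso_def graph_iso_def by auto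

lemma graph_iso_inv:
  assumes "graph_iso f G H"
  shows "graph_iso (inv_into (fst G) f) H G"
proof -
  let ?g = "inv_into (fst G) f"
  have f: "bij_betw f (fst G) (fst H)" and E: "\<forall>v\<in>fst G. \<forall>w\<in>fst G. snd H (f v) (f w) = snd G v w"
    using assms unfolding graph_iso_def by blast+
  have "snd G (?g v) (?g w) = snd H v w" if "v \<in> fst H" "w \<in> fst H" for v w
  proof -
    have "?g v \<in> fst G" "?g w \<in> fst G" "f (?g v) = v" "f (?g w) = w"
      using that bij_betwE[OF bij_betw_inv_into[OF f]] bij_betw_inv_into_right[OF f] by auto
    then show ?thesis using E by metis
  qed
  then show ?thesis using bij_betw_inv_into[OF f] unfolding graph_iso_def by blast
qed

lemma graph_iso_comp:
  "graph_iso f G H \<Longrightarrow> graph_iso g H K \<Longrightarrow> graph_iso (g \<circ> f) G K"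
  unfolding graph_iso_def by (auto intro: bij_betw_trans dest: bij_betwE)

lemma rooted_iso_refl: "x \<in> fst G \<Longrightarrow> rooted_iso (G, x) (G, x)"
  unfolding rooted_iso_iff_graph_iso graph_iso_def by (auto intro!: exI[of _ id])

lemma rooted_iso_sym: "rooted_iso g h \<Longrightarrow> rooted_iso h g"
proof (cases g, cases h)
  fix G x H y assume g: "g = (G, x)" and h: "h = (H, y)" and "rooted_iso g h"
  then obtain f where "x \<in> fst G" "graph_iso f G H" "f x = y"
    unfolding g h rooted_iso_iff_graph_iso by blast
  moreover from this have "y \<in> fst H" "inv_into (fst G) f y = x"
    unfolding graph_iso_def by (auto intro: bij_betw_inv_into_left dest: bij_betwE)
  ultimately show "rooted_iso h g"
    unfolding g h rooted_iso_iff_graph_iso by (blast intro: graph_iso_inv)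
qed

lemma rooted_iso_trans: "rooted_iso g h \<Longrightarrow> rooted_iso h k \<Longrightarrow> rooted_iso g k"
  by (cases g, cases h, cases k) (auto simp: rooted_iso_iff_graph_iso intro: graph_iso_comp)

lemma rooted_iso_cong_left: "rooted_iso g h \<Longrightarrow> rooted_iso g k \<longleftrightarrow> rooted_iso h k"
  by (metis rooted_iso_sym rooted_iso_trans)

lemma root_in_bset: "x \<in> bset E x r"
  by (induction r) auto

lemma bset_mono: "k \<le> r \<Longrightarrow> bset E x k \<subseteq> bset E x r"
  by (induction r) (auto simp: le_Suc_eq)

lemma adj_in_bset_Suc: "v \<in> bset E x k \<Longrightarrow> adj E v w \<Longrightarrow> w \<in> bset E x (Suc k)"
  by auto

lemma bset_subset:
  assumes "wf_graph (V, E)" "x \<in> V"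
  shows "bset E x r \<subseteq> V"
  using assms by (induction r) (auto simp: wf_graph_def adj_def)

lemma finite_bset:
  assumes "wf_graph (V, E)" "locally_finite (V, E)" "x \<in> V"
  shows "finite (bset E x r)"
proof (induction r)
  case (Suc r)
  have "{w. \<exists>v\<in>bset E x r. adj E v w} = (\<Union>v\<in>bset E x r. {w. adj E v w})" by auto
  moreover have "finite \<dots>"
    using Suc bset_subset[OF assms(1,3)] assms(2) unfolding locally_finite_def by auto
  ultimately show ?case using Suc by simp
qed simp

lemma connected_rootedI:
  assumes "wf_graph G" "x \<in> fst G" "fst G \<subseteq> bset (snd G) x k"
  shows "connected_rooted (G, x)"
  using assms bset_subset[of "fst G" "snd G" x] unfolding connected_rooted_def by auto

lemma adj_image:
  assumes "graph_iso f (V, E) (V', E')" "wf_graph (V, E)" "wf_graph (V', E')" "v \<in> V"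
  shows "{w'. adj E' (f v) w'} = f ` {w. adj E v w}"
proof -
  have f: "bij_betw f V V'" and E: "\<And>v w. v \<in> V \<Longrightarrow> w \<in> V \<Longrightarrow> E' (f v) (f w) = E v w"
    using assms(1) unfolding graph_iso_def by auto
  have adj: "adj E' (f v) (f w) \<longleftrightarrow> adj E v w" if "w \<in> V" for w
    using E assms(4) that unfolding adj_def by simp
  have sub: "{w'. adj E' (f v) w'} \<subseteq> f ` V" "{w. adj E v w} \<subseteq> V"
    using assms(2,3) f unfolding wf_graph_def adj_def bij_betw_def by auto
  show ?thesis
  proof (intro equalityI subsetI)
    fix w' assume w': "w' \<in> {w'. adj E' (f v) w'}"
    then obtain w where "w \<in> V" "w' = f w" using sub(1) by blast
    then show "w' \<in> f ` {w. adj E v w}" using adj w' by auto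
  next
    fix w' assume "w' \<in> f ` {w. adj E v w}"
    then show "w' \<in> {w'. adj E' (f v) w'}" using adj sub(2) by auto
  qed
qed

lemma bset_image:
  assumes "graph_iso f (V, E) (V', E')" "wf_graph (V, E)" "wf_graph (V', E')" "x \<in> V"
  shows "bset E' (f x) r = f ` bset E x r"
proof (induction r)
  case (Suc r)
  have "{w'. \<exists>v'\<in>bset E' (f x) r. adj E' v' w'} = (\<Union>v\<in>bset E x r. {w'. adj E' (f v) w'})"
    using Suc by auto
  also have "\<dots> = (\<Union>v\<in>bset E x r. f ` {w. adj E v w})"
    using adj_image[OF assms(1-3)] bset_subset[OF assms(2,4)] by (intro SUP_cong) auto
  also have "\<dots> = f ` {w. \<exists>v\<in>bset E x r. adj E v w}"
    by auto
  finally show ?case using Suc by (simp add: image_Un)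
qed simp

lemma ball_eq: "ball ((V, E), x) r =
    ((bset E x r, \<lambda>v w. if v \<in> bset E x r \<and> w \<in> bset E x r then E v w else 0), x)"
  by (simp add: ball_def Let_def)

lemma snd_ball [simp]: "snd (ball g r) = snd g"
  by (simp add: ball_def Let_def)

lemma wf_graph_ball: "wf_graph (fst (ball g r))"
  unfolding wf_graph_def ball_def Let_def by (simp split: if_splits)

lemma rooted_iso_ball:
  assumes "rooted_iso (G, x) (H, y)" "wf_graph G" "wf_graph H"
  shows "rooted_iso (ball (G, x) r) (ball (H, y) r)"
proof -
  obtain V E V' E' where G: "G = (V, E)" and H: "H = (V', E')" by fastforce
  obtain f where f: "graph_iso f G H" "f x = y" and x: "x \<in> V"
    using assms(1) unfolding rooted_iso_iff_graph_iso G by auto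
  let ?B = "bset E x r"
  have B: "bset E' y r = f ` ?B" "?B \<subseteq> V"
    using bset_image[OF f(1)[unfolded G H] assms(2,3)[unfolded G H] x] bset_subset[OF _ x] assms(2)
    by (auto simp: G f(2)[symmetric])
  have E: "E' (f v) (f w) = E v w" if "v \<in> ?B" "w \<in> ?B" for v w
    using f(1) B(2) that unfolding graph_iso_def G H by auto
  have "bij_betw f ?B (f ` ?B)"
    using f(1) B(2) unfolding graph_iso_def G by (auto intro: bij_betw_subset)
  then have "graph_iso f (fst (ball (G, x) r)) (fst (ball (H, y) r))"
    unfolding G H ball_eq graph_iso_def B(1) using E by auto
  then show ?thesis
    using f(2) root_in_bset[of x E r] unfolding G H ball_eq rooted_iso_iff_graph_iso by auto
qed

lemma ball_cong:
  assumes "\<And>k v w. k < r \<Longrightarrow> v \<in> bset (snd G) x k \<Longrightarrow>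
      snd G' v w = snd G v w \<and> snd G' w v = snd G w v"
    and "\<And>v w. v \<in> bset (snd G) x r \<Longrightarrow> w \<in> bset (snd G) x r \<Longrightarrow> snd G' v w = snd G v w"
  shows "ball (G', x) r = ball (G, x) r"
proof -
  have "bset (snd G') x k = bset (snd G) x k" if "k \<le> r" for k
    using that
  proof (induction k)
    case (Suc k)
    then have "adj (snd G') v w \<longleftrightarrow> adj (snd G) v w" if "v \<in> bset (snd G) x k" for v w
      using assms(1)[of k v w] Suc.prems that unfolding adj_def by simp
    then show ?case using Suc by auto
  qed simp
  then show ?thesis using assms(2) unfolding ball_def Let_def by (auto intro!: ext)
qed

section \<open>The bipartite representation\<close>

lemma bip_simps:
  "fst (bip G) = fst G \<times> UNIV"
  "snd (bip G) (v, False) (w, True) = snd G v w"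
  "snd (bip G) (v, True) (w, False) = snd G w v"
  "snd (bip G) (v, b) (w, b) = 0"
  by (simp_all add: bip_def)

lemma wf_graph_bip: "wf_graph G \<Longrightarrow> wf_graph (bip G)"
  unfolding wf_graph_def bip_def by (auto split: if_splits)

lemma adj_bip: "adj (snd (bip G)) p q \<Longrightarrow> adj (snd G) (fst p) (fst q)"
  by (cases p, cases q) (auto simp: adj_def bip_def split: if_splits)

lemma bset_bip: "p \<in> bset (snd (bip G)) (x, b) k \<Longrightarrow> fst p \<in> bset (snd G) x k"
  by (induction k arbitrary: p) (auto dest: adj_bip)

lemma bip_cong:
  assumes "\<And>w. snd G' v w = snd G v w \<and> snd G' w v = snd G w v"
  shows "snd (bip G') (v, c) q = snd (bip G) (v, c) q \<and> snd (bip G') q (v, c) = snd (bip G) q (v, c)"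
  using assms by (cases q) (simp add: bip_def)

lemma rooted_iso_bip:
  assumes "rooted_iso (G, x) (H, y)"
  shows "rooted_iso (bip G, (x, b)) (bip H, (y, b))"
proof -
  obtain f where f: "graph_iso f G H" "f x = y" and x: "x \<in> fst G"
    using assms unfolding rooted_iso_iff_graph_iso by blast
  have "bij_betw (map_prod f id) (fst (bip G)) (fst (bip H))"
    using f(1) bij_betw_map_prod[OF _ bij_betw_id] unfolding graph_iso_def bip_simps by blast
  moreover have "snd (bip H) (map_prod f id p) (map_prod f id q) = snd (bip G) p q"
    if "p \<in> fst (bip G)" "q \<in> fst (bip G)" for p q
    using f(1) that unfolding graph_iso_def by (cases p, cases q) (simp add: bip_def)
  ultimately have "graph_iso (map_prod f id) (bip G) (bip H)"
    unfolding graph_iso_def by blast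
  moreover have "(x, b) \<in> fst (bip G)"
    using x by (simp add: bip_simps)
  ultimately show ?thesis
    using f(2) unfolding rooted_iso_iff_graph_iso by auto
qed

lemma ball_bip_eq_ball_bip_ball:
  "ball (bip G, (x, b)) r = ball (bip (fst (ball (G, x) r)), (x, b)) r"
proof -
  obtain V E where G: "G = (V, E)" by fastforce
  let ?B = "bset E x r"
  let ?R = "\<lambda>v w. if v \<in> ?B \<and> w \<in> ?B then E v w else 0"
  have R: "?R v w = E v w \<and> ?R w v = E w v" if "v \<in> bset E x k" "k < r" for k v w
  proof -
    have "v \<in> ?B" using that bset_mono[of k r E x] by auto
    moreover have "\<not> adj E v w" if "w \<notin> ?B"
      using adj_in_bset_Suc[OF \<open>v \<in> bset E x k\<close>] bset_mono[of "Suc k" r E x] \<open>k < r\<close> that by auto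
    ultimately show ?thesis unfolding adj_def by auto
  qed
  have "ball (bip (?B, ?R), (x, b)) r = ball (bip G, (x, b)) r"
  proof (rule ball_cong)
    fix k p q assume k: "k < r" and p: "p \<in> bset (snd (bip G)) (x, b) k"
    obtain v c where pv: "p = (v, c)" by fastforce
    have "v \<in> bset E x k" using bset_bip[OF p] by (simp add: pv G)
    then show "snd (bip (?B, ?R)) p q = snd (bip G) p q \<and> snd (bip (?B, ?R)) q p = snd (bip G) q p"
      unfolding pv using R[OF _ k] by (intro bip_cong) (simp add: G)
  next
    fix p q assume "p \<in> bset (snd (bip G)) (x, b) r" "q \<in> bset (snd (bip G)) (x, b) r"
    then have "fst p \<in> ?B" "fst q \<in> ?B" using bset_bip[of _ G] by (auto simp: G)
    then show "snd (bip (?B, ?R)) p q = snd (bip G) p q"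
      by (cases p, cases q) (simp add: bip_def G)
  qed
  then show ?thesis unfolding G ball_eq by simp
qed

lemma rooted_iso_ball_bip:
  assumes "rooted_iso (ball g r) (ball h r)"
  shows "rooted_iso (ball (bip (fst g), (snd g, b)) r) (ball (bip (fst h), (snd h, b)) r)"
proof -
  have "rooted_iso (fst (ball g r), snd g) (fst (ball h r), snd h)"
    using assms by (metis prod.collapse snd_ball)
  then have "rooted_iso (bip (fst (ball g r)), (snd g, b)) (bip (fst (ball h r)), (snd h, b))"
    by (rule rooted_iso_bip)
  then have "rooted_iso (ball (bip (fst (ball g r)), (snd g, b)) r) (ball (bip (fst (ball h r)), (snd h, b)) r)"
    by (intro rooted_iso_ball wf_graph_bip wf_graph_ball)
  then show ?thesis
    using ball_bip_eq_ball_bip_ball[of "fst g" "snd g" b r] ball_bip_eq_ball_bip_ball[of "fst h" "snd h" b r]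
    by simp
qed

section \<open>The partition by isomorphism type of balls\<close>

text \<open>The type of rooted graphs is uncountable, since edge functions are arbitrary outside the
  vertex set; representatives are therefore taken from adjacency matrices, which range over a
  countable type.\<close>

definition rgraph_of_matrix :: "nat list list \<Rightarrow> nat \<Rightarrow> nat rgraph" where
  "rgraph_of_matrix m k =
     (({0..<length m}, \<lambda>i j. if i < length m \<and> j < length m then m ! i ! j else 0), k)"

definition matrix_rgraphs :: "nat rgraph set" where
  "matrix_rgraphs = {rgraph_of_matrix m k | m k. k < length m}"

lemma countable_matrix_rgraphs: "countable matrix_rgraphs"
proof -
  have "matrix_rgraphs \<subseteq> range (case_prod rgraph_of_matrix)"
    unfolding matrix_rgraphs_def by (auto intro: range_eqI[of _ _ "(_, _)"])
  then show ?thesis by (rule countable_subset) simp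
qed

lemma finite_rgraph_matrix_rgraphs: "H \<in> matrix_rgraphs \<Longrightarrow> finite_rgraph H"
  unfolding matrix_rgraphs_def rgraph_of_matrix_def finite_rgraph_def wf_graph_def
  by (auto split: if_splits)

lemma ex_matrix_rgraph_rooted_iso:
  assumes "finite V" "x \<in> V"
  shows "\<exists>H\<in>matrix_rgraphs. rooted_iso ((V, E), x) H"
proof -
  let ?n = "card V"
  obtain h where h: "bij_betw h V {0..<?n}"
    using ex_bij_betw_finite_nat[OF assms(1)] by blast
  let ?h' = "inv_into V h"
  define m where "m = map (\<lambda>i. map (\<lambda>j. E (?h' i) (?h' j)) [0..<?n]) [0..<?n]"
  have hV: "h v < ?n" "?h' (h v) = v" if "v \<in> V" for v
    using that h bij_betwE[OF h] by (auto simp: bij_betw_inv_into_left)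
  let ?H = "fst (rgraph_of_matrix m (h x))"
  have "bij_betw h V (fst ?H)"
    using h by (simp add: rgraph_of_matrix_def m_def)
  moreover have "snd ?H (h v) (h w) = E v w" if "v \<in> V" "w \<in> V" for v w
    using hV[OF that(1)] hV[OF that(2)] by (simp add: rgraph_of_matrix_def m_def)
  ultimately have "graph_iso h (V, E) ?H"
    unfolding graph_iso_def by simp
  then have "rooted_iso ((V, E), x) (?H, h x)"
    using assms(2) unfolding rooted_iso_iff_graph_iso by auto
  then have "rooted_iso ((V, E), x) (rgraph_of_matrix m (h x))"
    by (simp add: rgraph_of_matrix_def)
  moreover have "rgraph_of_matrix m (h x) \<in> matrix_rgraphs"
    unfolding matrix_rgraphs_def
    by (intro CollectI exI[of _ m] exI[of _ "h x"]) (simp add: hV(1)[OF assms(2)] m_def)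
  ultimately show ?thesis by blast
qed

lemma ex_matrix_rgraph_rooted_iso_ball:
  assumes "wf_graph G" "locally_finite G" "x \<in> fst G"
  shows "\<exists>K\<in>matrix_rgraphs. rooted_iso (ball (G, x) r) K"
proof -
  obtain V E where G: "G = (V, E)" by fastforce
  have "finite (bset E x r)"
    using finite_bset assms unfolding G by auto
  then show ?thesis
    unfolding G ball_eq by (rule ex_matrix_rgraph_rooted_iso) (rule root_in_bset)
qed

definition ball_classes :: "nat \<Rightarrow> 'a rgraph set set" where
  "ball_classes r = (\<lambda>K. {g. rooted_iso (ball g r) K}) ` matrix_rgraphs"

lemma ball_classesE:
  assumes "A \<in> ball_classes r"
  obtains K where "K \<in> matrix_rgraphs" "A = {g. rooted_iso (ball g r) K}"
  using assms unfolding ball_classes_def by blast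

lemma countable_ball_classes: "countable (ball_classes r)"
  unfolding ball_classes_def using countable_matrix_rgraphs by (rule countable_image)

lemma disjoint_ball_classes: "disjoint (ball_classes r :: 'a rgraph set set)"
proof (unfold ball_classes_def, rule pairwise_imageI)
  fix K K' :: "nat rgraph"
  assume ne: "{g :: 'a rgraph. rooted_iso (ball g r) K} \<noteq> {g. rooted_iso (ball g r) K'}"
  show "disjnt {g :: 'a rgraph. rooted_iso (ball g r) K} {g. rooted_iso (ball g r) K'}"
  proof (rule ccontr)
    assume "\<not> disjnt {g :: 'a rgraph. rooted_iso (ball g r) K} {g. rooted_iso (ball g r) K'}"
    then obtain g :: "'a rgraph" where "rooted_iso (ball g r) K" "rooted_iso (ball g r) K'"
      unfolding disjnt_def by blast
    then have "rooted_iso K K'"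
      by (metis rooted_iso_sym rooted_iso_trans)
    then have "rooted_iso (ball h r) K \<longleftrightarrow> rooted_iso (ball h r) K'" for h :: "'a rgraph"
      by (metis rooted_iso_sym rooted_iso_trans)
    then show False using ne by simp
  qed
qed

lemma ball_classes_cover:
  assumes "wf_graph (fst g)" "locally_finite (fst g)" "snd g \<in> fst (fst g)"
  shows "g \<in> \<Union>(ball_classes r)"
proof -
  obtain K :: "nat rgraph" where "K \<in> matrix_rgraphs" "rooted_iso (ball g r) K"
    using ex_matrix_rgraph_rooted_iso_ball[OF assms, of r] unfolding prod.collapse by blast
  then show ?thesis
    unfolding ball_classes_def by blast
qed

section \<open>Convergence on a countable partition\<close>

lemma sets_Union_Int_space:
  assumes "countable \<G>" "\<And>A. A \<in> \<G> \<Longrightarrow> A \<inter> space M \<in> sets M"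
  shows "\<Union>\<G> \<inter> space M \<in> sets M"
proof -
  have "\<Union>\<G> \<inter> space M = (\<Union>A\<in>\<G>. A \<inter> space M)" by blast
  moreover have "(\<Union>A\<in>\<G>. A \<inter> space M) \<in> sets M"
    using assms by (intro sets.countable_UN') auto
  ultimately show ?thesis by (simp only:)
qed

lemma (in finite_measure) finite_subfamily_almost_covers:
  assumes "countable \<A>" "\<And>A. A \<in> \<A> \<Longrightarrow> A \<inter> space M \<in> sets M" "space M \<subseteq> \<Union>\<A>" "e > 0"
  obtains \<F> where "finite \<F>" "\<F> \<subseteq> \<A>" "measure M (space M - \<Union>\<F>) < e"
proof (cases "\<A> = {}")
  case True
  then show ?thesis using that[of "{}"] assms(3,4) by simp
next
  case False
  let ?A = "from_nat_into \<A>"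
  define S where "S k = \<Union>(?A ` {..<k}) \<inter> space M" for k
  have A: "?A i \<in> \<A>" for i
    using False by (rule from_nat_into)
  have S: "S k \<in> sets M" for k
    unfolding S_def using A assms(2) by (intro sets_Union_Int_space) auto
  have "incseq S"
    unfolding incseq_def S_def by (intro allI impI Int_mono Union_mono image_mono) auto
  moreover have "(\<Union>k. S k) = space M"
  proof -
    have "space M \<subseteq> (\<Union>i. ?A i)"
      using assms(1,3) range_from_nat_into[OF False] by simp
    then show ?thesis unfolding S_def by blast
  qed
  ultimately have "(\<lambda>k. measure M (S k)) \<longlonglongrightarrow> measure M (space M)"
    using finite_Lim_measure_incseq[of S] S by auto
  then have "eventually (\<lambda>k. measure M (S k) > measure M (space M) - e) sequentially"
    using assms(4) by (intro order_tendstoD(1)) auto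
  then obtain k where "measure M (S k) > measure M (space M) - e"
    by (metis eventually_sequentially order_refl)
  moreover have "space M - \<Union>(?A ` {..<k}) = space M - S k"
    unfolding S_def by blast
  ultimately have "measure M (space M - \<Union>(?A ` {..<k})) < e"
    using finite_measure_compl[OF S, of k] by simp
  then show ?thesis
    using that[of "?A ` {..<k}"] A by blast
qed

lemma tendsto_measure_pmf_finite_Union:
  fixes P :: "nat \<Rightarrow> 'a pmf"
  assumes "finite_measure M" "finite \<F>" "disjoint \<F>"
    and "\<And>A. A \<in> \<F> \<Longrightarrow> A \<inter> space M \<in> sets M"
    and "\<And>A. A \<in> \<F> \<Longrightarrow> (\<lambda>n. measure (P n) A) \<longlonglongrightarrow> measure M (A \<inter> space M)"
  shows "(\<lambda>n. measure (P n) (\<Union>\<F>)) \<longlonglongrightarrow> measure M (\<Union>\<F> \<inter> space M)"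
proof -
  have disj: "disjoint_family_on (\<lambda>A. A \<inter> S) \<F>" for S
  proof (unfold disjoint_family_on_def, intro ballI impI)
    fix A B assume "A \<in> \<F>" "B \<in> \<F>" "A \<noteq> B"
    then have "A \<inter> B = {}" using assms(3) unfolding pairwise_def disjnt_def by blast
    then show "A \<inter> S \<inter> (B \<inter> S) = {}" by blast
  qed
  have "measure (P n) (\<Union>\<F>) = (\<Sum>A\<in>\<F>. measure (P n) A)" for n
    using measure_pmf.finite_measure_finite_Union[OF assms(2), of "\<lambda>A. A"] disj[of UNIV] by simp
  moreover have "measure M (\<Union>\<F> \<inter> space M) = (\<Sum>A\<in>\<F>. measure M (A \<inter> space M))"
  proof -
    have "\<Union>\<F> \<inter> space M = (\<Union>A\<in>\<F>. A \<inter> space M)" by blast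
    then show ?thesis
      using finite_measure.finite_measure_finite_Union[OF assms(1,2) _ disj] assms(4) by auto
  qed
  ultimately show ?thesis
    using assms(5) by (simp add: tendsto_sum)
qed

lemma eventually_measure_pmf_gt:
  fixes P :: "nat \<Rightarrow> 'a pmf"
  assumes M: "finite_measure M"
    and \<A>: "countable \<A>" "disjoint \<A>" "space M \<subseteq> \<Union>\<A>"
    and meas: "\<And>A. A \<in> \<A> \<Longrightarrow> A \<inter> space M \<in> sets M"
    and conv: "\<And>A. A \<in> \<A> \<Longrightarrow> (\<lambda>n. measure (P n) A) \<longlonglongrightarrow> measure M (A \<inter> space M)"
    and B: "\<And>A. A \<in> \<A> \<Longrightarrow> A \<subseteq> B \<or> A \<inter> B = {}"
    and e: "e > 0"
  shows "eventually (\<lambda>n. measure (P n) B > measure M (B \<inter> space M) - e) sequentially"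
proof -
  interpret finite_measure M by (rule M)
  obtain \<F> where \<F>: "finite \<F>" "\<F> \<subseteq> \<A>" "measure M (space M - \<Union>\<F>) < e / 2"
    using finite_subfamily_almost_covers[OF \<A>(1) meas \<A>(3), of "e / 2"] e by auto
  define \<F>\<^sub>B where "\<F>\<^sub>B = {A \<in> \<F>. A \<subseteq> B}"
  have \<F>\<^sub>B: "finite \<F>\<^sub>B" "\<F>\<^sub>B \<subseteq> \<A>" "\<Union>\<F>\<^sub>B \<subseteq> B"
    using \<F> unfolding \<F>\<^sub>B_def by auto
  have union_meas: "\<Union>\<G> \<inter> space M \<in> sets M" if "finite \<G>" "\<G> \<subseteq> \<A>" for \<G>
    using that meas by (intro sets_Union_Int_space countable_finite) auto
  have rest: "space M - \<Union>\<F> \<in> sets M"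
  proof -
    have "space M - \<Union>\<F> = space M - (\<Union>\<F> \<inter> space M)" by blast
    then show ?thesis using sets.Diff[OF sets.top union_meas[OF \<F>(1,2)]] by (simp only:)
  qed
  have "B \<inter> space M \<subseteq> (\<Union>\<F>\<^sub>B \<inter> space M) \<union> (space M - \<Union>\<F>)"
    using B(1) \<F>(2) unfolding \<F>\<^sub>B_def by blast
  then have "measure M (B \<inter> space M) \<le> measure M ((\<Union>\<F>\<^sub>B \<inter> space M) \<union> (space M - \<Union>\<F>))"
    using union_meas[OF \<F>\<^sub>B(1,2)] rest by (intro finite_measure_mono) auto
  also have "\<dots> \<le> measure M (\<Union>\<F>\<^sub>B \<inter> space M) + measure M (space M - \<Union>\<F>)"
    using union_meas[OF \<F>\<^sub>B(1,2)] rest by (intro measure_subadditive) auto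
  finally have "measure M (B \<inter> space M) - e / 2 < measure M (\<Union>\<F>\<^sub>B \<inter> space M)"
    using \<F>(3) by linarith
  moreover have "(\<lambda>n. measure (P n) (\<Union>\<F>\<^sub>B)) \<longlonglongrightarrow> measure M (\<Union>\<F>\<^sub>B \<inter> space M)"
    using \<F>\<^sub>B meas conv pairwise_subset[OF \<A>(2)]
    by (intro tendsto_measure_pmf_finite_Union[OF M]) auto
  ultimately have "eventually (\<lambda>n. measure (P n) (\<Union>\<F>\<^sub>B) > measure M (B \<inter> space M) - e) sequentially"
    using e by (elim order_tendstoD(1)) linarith
  then show ?thesis
  proof eventually_elim
    case (elim n)
    then show ?case using measure_pmf.finite_measure_mono[OF \<F>\<^sub>B(3), of "P n"] by simp
  qed
qed

lemma saturated_Int_space_in_sets: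
  assumes "countable \<A>" "space M \<subseteq> \<Union>\<A>" "\<And>A. A \<in> \<A> \<Longrightarrow> A \<inter> space M \<in> sets M"
    and "\<And>A. A \<in> \<A> \<Longrightarrow> A \<subseteq> C \<or> A \<inter> C = {}"
  shows "C \<inter> space M \<in> sets M"
proof -
  have "C \<inter> space M = \<Union>{A \<in> \<A>. A \<subseteq> C} \<inter> space M"
  proof (intro equalityI subsetI)
    fix g assume g: "g \<in> C \<inter> space M"
    then obtain A where "A \<in> \<A>" "g \<in> A" using assms(2) by blast
    moreover from this have "A \<subseteq> C" using assms(4) g by blast
    ultimately show "g \<in> \<Union>{A \<in> \<A>. A \<subseteq> C} \<inter> space M" using g by blast
  qed auto
  moreover have "\<Union>{A \<in> \<A>. A \<subseteq> C} \<inter> space M \<in> sets M"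
    using assms(1,3) by (intro sets_Union_Int_space) (auto intro: countable_subset)
  ultimately show ?thesis by (simp only:)
qed

text \<open>The limit being a probability measure is what keeps mass from escaping to infinitely
  many cells.\<close>

lemma tendsto_measure_pmf_saturated:
  fixes P :: "nat \<Rightarrow> 'a pmf"
  assumes M: "prob_space M"
    and \<A>: "countable \<A>" "disjoint \<A>" "space M \<subseteq> \<Union>\<A>"
    and meas: "\<And>A. A \<in> \<A> \<Longrightarrow> A \<inter> space M \<in> sets M"
    and conv: "\<And>A. A \<in> \<A> \<Longrightarrow> (\<lambda>n. measure (P n) A) \<longlonglongrightarrow> measure M (A \<inter> space M)"
    and B: "\<And>A. A \<in> \<A> \<Longrightarrow> A \<subseteq> B \<or> A \<inter> B = {}"
  shows "(\<lambda>n. measure (P n) B) \<longlonglongrightarrow> measure M (B \<inter> space M)"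
proof -
  interpret prob_space M by (rule M)
  have compl: "\<And>A. A \<in> \<A> \<Longrightarrow> A \<subseteq> - B \<or> A \<inter> - B = {}"
    using B by blast
  have lower: "eventually (\<lambda>n. measure (P n) C > measure M (C \<inter> space M) - e) sequentially"
    if "\<And>A. A \<in> \<A> \<Longrightarrow> A \<subseteq> C \<or> A \<inter> C = {}" "e > 0" for C e
    using eventually_measure_pmf_gt[OF finite_measure_axioms \<A>, of P C e] meas conv that by blast
  show ?thesis
  proof (rule order_tendstoI)
    fix a assume "a < measure M (B \<inter> space M)"
    then show "eventually (\<lambda>n. a < measure (P n) B) sequentially"
      using lower[OF B, of "measure M (B \<inter> space M) - a"] by simp
  next
    fix a assume a: "a > measure M (B \<inter> space M)"
    have "- B \<inter> space M = space M - (B \<inter> space M)" by blast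
    then have "measure M (- B \<inter> space M) = 1 - measure M (B \<inter> space M)"
      using prob_compl[OF saturated_Int_space_in_sets[OF \<A>(1,3) meas B]] by simp
    moreover have "measure (P n) (- B) = 1 - measure (P n) B" for n
      using measure_pmf.prob_compl[of B "P n"] by (simp add: Compl_eq_Diff_UNIV)
    ultimately show "eventually (\<lambda>n. measure (P n) B < a) sequentially"
      using lower[OF compl, of "a - measure M (B \<inter> space M)"] a by simp
  qed
qed

lemma measure_bind_pmf:
  "measure (bind_pmf N f) S = (\<integral>x. measure (f x) S \<partial>N)"
  unfolding measure_pmf_bind
  by (rule measure_pmf.measure_bind[where N="count_space UNIV"]) (auto simp: measure_subprob)

lemma measure_pmf_of_set_times_bool:
  assumes "finite V" "V \<noteq> {}"
  shows "measure (pmf_of_set (V \<times> (UNIV :: bool set))) X =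
    (measure (pmf_of_set V) {v. (v, False) \<in> X} + measure (pmf_of_set V) {v. (v, True) \<in> X}) / 2"
proof -
  let ?X = "\<lambda>b. {v \<in> V. (v, b) \<in> X}"
  have split: "V \<times> UNIV \<inter> X = ?X False \<times> {False} \<union> ?X True \<times> {True}"
  proof (intro set_eqI)
    fix p :: "'a \<times> bool"
    show "p \<in> V \<times> UNIV \<inter> X \<longleftrightarrow> p \<in> ?X False \<times> {False} \<union> ?X True \<times> {True}"
      by (cases p, cases "snd p") auto
  qed
  have "card (V \<times> UNIV \<inter> X) = card (?X False) + card (?X True)"
    unfolding split using assms(1) by (subst card_Un_disjoint) (auto simp: card_cartesian_product)
  moreover have "V \<inter> {v. (v, b) \<in> X} = ?X b" for b
    by blast
  ultimately show ?thesis
    using assms by (simp add: measure_pmf_of_set card_cartesian_product add_divide_distrib)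
qed

lemma measure_rooted_unif_bip:
  assumes "finite_random_graph N"
  shows "measure (rooted_unif (map_pmf bip N)) S =
    (measure (rooted_unif N) {g. (bip (fst g), (snd g, False)) \<in> S} +
     measure (rooted_unif N) {g. (bip (fst g), (snd g, True)) \<in> S}) / 2"
proof -
  define f where "f b G = measure (pmf_of_set (fst G)) {v. (bip G, (v, b)) \<in> S}" for b G
  have int: "integrable N (f b)" for b
    unfolding f_def by (rule measure_pmf.integrable_const_bound[where B=1]) auto
  have "measure (rooted_unif (map_pmf bip N)) S =
      (\<integral>G. measure (pmf_of_set (fst G \<times> UNIV)) {p. (bip G, p) \<in> S} \<partial>N)"
    unfolding rooted_unif_def bind_map_pmf measure_bind_pmf by (simp add: bip_def vimage_def)
  also have "\<dots> = (\<integral>G. (f False G + f True G) / 2 \<partial>N)"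
  proof (rule integral_cong_AE)
    show "AE G in N. measure (pmf_of_set (fst G \<times> UNIV)) {p. (bip G, p) \<in> S} =
        (f False G + f True G) / 2"
      using AE_measure_pmf[of N]
    proof eventually_elim
      case (elim G)
      then have "finite (fst G)" "fst G \<noteq> {}"
        using assms unfolding finite_random_graph_def by auto
      then show ?case
        unfolding f_def by (subst measure_pmf_of_set_times_bool) auto
    qed
  qed auto
  also have "\<dots> = ((\<integral>G. f False G \<partial>N) + (\<integral>G. f True G \<partial>N)) / 2"
    using int by simp
  also have "\<dots> = (measure (rooted_unif N) {g. (bip (fst g), (snd g, False)) \<in> S} +
     measure (rooted_unif N) {g. (bip (fst g), (snd g, True)) \<in> S}) / 2"
    unfolding rooted_unif_def measure_bind_pmf f_def by (simp add: vimage_def)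
  finally show ?thesis .
qed

lemma measure_rooted_unif_return_pmf:
  assumes "finite (fst G)" "fst G \<noteq> {}" "\<And>v. v \<in> fst G \<Longrightarrow> P (G, v) \<longleftrightarrow> Q"
  shows "measure (rooted_unif (return_pmf G)) {g. P g} = of_bool Q"
proof -
  have "measure (rooted_unif (return_pmf G)) {g. P g} = measure (pmf_of_set (fst G)) {v. P (G, v)}"
    unfolding rooted_unif_def bind_return_pmf measure_map_pmf by (simp add: vimage_def)
  also have "\<dots> = of_bool Q"
  proof (cases Q)
    case True
    then have "fst G \<subseteq> {v. P (G, v)}" using assms(3) by blast
    then show ?thesis using True assms(1,2) by (simp add: measure_pmf_of_set Int_absorb2)
  next
    case False
    then have "fst G \<inter> {v. P (G, v)} = {}" using assms(3) by blast
    then show ?thesis using False assms(1,2) by (simp add: measure_pmf_of_set)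
  qed
  finally show ?thesis .
qed

lemma ball_class_bip_saturated:
  assumes "A \<in> ball_classes r"
  shows "A \<subseteq> {g. rooted_iso (ball (bip (fst g), (snd g, b)) r) H} \<or>
    A \<inter> {g. rooted_iso (ball (bip (fst g), (snd g, b)) r) H} = {}"
proof -
  obtain K :: "nat rgraph" where A: "A = {g. rooted_iso (ball g r) K}"
    using assms by (rule ball_classesE)
  have "rooted_iso (ball (bip (fst g), (snd g, b)) r) (ball (bip (fst g'), (snd g', b)) r)"
    if "g \<in> A" "g' \<in> A" for g g'
    using that rooted_iso_ball_bip rooted_iso_trans[OF _ rooted_iso_sym] unfolding A by blast
  then show ?thesis
    using rooted_iso_cong_left by blast
qed

lemma space_subset_ball_classes:
  "random_rooted_graph M \<Longrightarrow> space M \<subseteq> \<Union>(ball_classes r)"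
  using ball_classes_cover unfolding random_rooted_graph_def connected_rooted_def by blast

lemma ball_class_Int_space_in_sets:
  assumes "random_rooted_graph M" "A \<in> ball_classes r"
  shows "A \<inter> space M \<in> sets M"
proof -
  obtain K :: "nat rgraph" where "A = {g. rooted_iso (ball g r) K}"
    using assms(2) by (rule ball_classesE)
  moreover have "{g \<in> space M. rooted_iso (ball g r) K} \<in> sets M"
    using assms(1) unfolding random_rooted_graph_def by blast
  ultimately show ?thesis
    by (simp add: Collect_conj_eq Int_commute)
qed

lemma lw_conv_tendsto_ball_class:
  assumes "lw_conv Gs (ball_prob M)" "A \<in> ball_classes r"
  shows "(\<lambda>n. measure (rooted_unif (Gs n)) A) \<longlonglongrightarrow> measure M (A \<inter> space M)"
proof -
  obtain K :: "nat rgraph" where K: "K \<in> matrix_rgraphs" and A: "A = {g. rooted_iso (ball g r) K}"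
    using assms(2) by (rule ball_classesE)
  have "(\<lambda>n. measure (rooted_unif (Gs n)) {g. rooted_iso (ball g r) K})
      \<longlonglongrightarrow> measure M {g \<in> space M. rooted_iso (ball g r) K}"
    using assms(1) finite_rgraph_matrix_rgraphs[OF K] unfolding lw_conv_def ball_prob_def by blast
  then show ?thesis
    by (simp add: A Collect_conj_eq Int_commute)
qed

lemma lw_conv_bip:
  fixes Gs :: "nat \<Rightarrow> 'v graph pmf" and M :: "'v rgraph measure"
  assumes Gs: "\<And>n. finite_random_graph (Gs n)" and M: "random_rooted_graph M"
    and lim: "lw_conv Gs (ball_prob M)"
  shows "lw_conv (\<lambda>n. map_pmf bip (Gs n)) (bip_ball_prob M)"
  unfolding lw_conv_def
proof (intro allI impI)
  fix r and H :: "nat rgraph"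
  have "prob_space M"
    using M unfolding random_rooted_graph_def by blast
  then have bip_conv: "(\<lambda>n. measure (rooted_unif (Gs n)) {g. rooted_iso (ball (bip (fst g), (snd g, b)) r) H})
      \<longlonglongrightarrow> measure M ({g. rooted_iso (ball (bip (fst g), (snd g, b)) r) H} \<inter> space M)" for b
    using countable_ball_classes disjoint_ball_classes space_subset_ball_classes[OF M]
      ball_class_Int_space_in_sets[OF M] lw_conv_tendsto_ball_class[OF lim] ball_class_bip_saturated
    by (rule tendsto_measure_pmf_saturated)
  have "{g. P g} \<inter> space M = {g \<in> space M. P g}" for P
    by blast
  then show "(\<lambda>n. measure (rooted_unif (map_pmf bip (Gs n))) {g. rooted_iso (ball g r) H})
      \<longlonglongrightarrow> bip_ball_prob M r H"
    unfolding measure_rooted_unif_bip[OF Gs] bip_ball_prob_def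
    using bip_conv[of False] bip_conv[of True] by (intro tendsto_divide tendsto_add) simp_all
qed

definition isolated_edge :: "('v \<Rightarrow> 'v \<Rightarrow> nat) \<Rightarrow> 'v \<Rightarrow> 'v \<Rightarrow> bool" where
  "isolated_edge E x y \<longleftrightarrow> x \<noteq> y \<and> E x y = 1 \<and> E y x = 1 \<and>
     (\<forall>w. adj E x w \<longleftrightarrow> w = y) \<and> (\<forall>w. adj E y w \<longleftrightarrow> w = x)"

lemma isolated_edge_sym: "isolated_edge E x y \<Longrightarrow> isolated_edge E y x"
  unfolding isolated_edge_def by auto

lemma isolated_edge_weights:
  assumes "isolated_edge E x y" "v \<in> {x, y}" "w \<in> {x, y}"
  shows "E v w = (if v = w then 0 else 1)"
  using assms unfolding isolated_edge_def adj_def by auto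

lemma bset_isolated_edge:
  assumes "isolated_edge E x y"
  shows "bset E x r = (if r = 0 then {x} else {x, y})"
proof (induction r)
  case (Suc r)
  then show ?case using assms unfolding isolated_edge_def by auto
qed simp

lemma rooted_iso_ball_isolated_edge:
  assumes e: "isolated_edge E x y" and e': "isolated_edge E' x' y'"
  shows "rooted_iso (ball ((V, E), x) r) (ball ((V', E'), x') r)"
proof -
  define f where "f v = (if v = x then x' else y')" for v
  have xy: "x \<noteq> y" "x' \<noteq> y'" using e e' unfolding isolated_edge_def by auto
  have B: "bset E' x' r = f ` bset E x r" "bset E x r \<subseteq> {x, y}"
    using xy unfolding bset_isolated_edge[OF e] bset_isolated_edge[OF e'] f_def by auto
  have "inj_on f {x, y}"
    using xy unfolding f_def by (auto simp: inj_on_def)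
  then have "bij_betw f (bset E x r) (bset E' x' r)"
    using B by (auto intro: inj_on_subset simp: bij_betw_def)
  moreover have "E' (f v) (f w) = E v w" if "v \<in> bset E x r" "w \<in> bset E x r" for v w
  proof -
    have vw: "v \<in> {x, y}" "w \<in> {x, y}" using that B(2) by auto
    then have "f v \<in> {x', y'}" "f w \<in> {x', y'}" "f v = f w \<longleftrightarrow> v = w"
      using xy unfolding f_def by auto
    then show ?thesis
      using isolated_edge_weights[OF e vw] isolated_edge_weights[OF e'] by simp
  qed
  ultimately have "graph_iso f (fst (ball ((V, E), x) r)) (fst (ball ((V', E'), x') r))"
    using B(1) unfolding ball_eq graph_iso_def by auto
  then show ?thesis
    using root_in_bset[of x E r] unfolding ball_eq rooted_iso_iff_graph_iso by (auto simp: f_def)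
qed

definition perm_graph :: "'v set \<Rightarrow> ('v \<Rightarrow> 'v) \<Rightarrow> 'v graph" where
  "perm_graph V \<sigma> = (V, \<lambda>v w. if v \<in> V \<and> w = \<sigma> v then 1 else 0)"

lemma wf_graph_perm_graph: "bij_betw \<sigma> V V \<Longrightarrow> wf_graph (perm_graph V \<sigma>)"
  unfolding wf_graph_def perm_graph_def by (auto dest: bij_betwE)

lemma locally_finite_perm_graph: "finite V \<Longrightarrow> bij_betw \<sigma> V V \<Longrightarrow> locally_finite (perm_graph V \<sigma>)"
  unfolding locally_finite_def perm_graph_def adj_def
  by (auto intro: finite_subset[of _ V] dest: bij_betwE split: if_splits)

lemma finite_random_graph_perm_graph:
  "finite V \<Longrightarrow> V \<noteq> {} \<Longrightarrow> bij_betw \<sigma> V V \<Longrightarrow> finite_random_graph (return_pmf (perm_graph V \<sigma>))"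
  unfolding finite_random_graph_def using wf_graph_perm_graph by (simp add: perm_graph_def)

lemma isolated_edge_bip_perm_graph:
  assumes \<sigma>: "bij_betw \<sigma> V V" and v: "v \<in> V"
  shows "isolated_edge (snd (bip (perm_graph V \<sigma>))) (v, False) (\<sigma> v, True)"
proof -
  have "inj_on \<sigma> V" "\<sigma> v \<in> V" using \<sigma> v by (auto simp: bij_betw_def)
  then show ?thesis
    using v unfolding isolated_edge_def adj_def perm_graph_def bip_def inj_on_def
    by (auto split: if_splits)
qed

lemma ex_isolated_edge_bip_perm_graph:
  assumes \<sigma>: "bij_betw \<sigma> V V" and p: "p \<in> fst (bip (perm_graph V \<sigma>))"
  shows "\<exists>q. isolated_edge (snd (bip (perm_graph V \<sigma>))) p q"
proof -
  obtain v b where pv: "p = (v, b)" and v: "v \<in> V"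
    using p by (auto simp: bip_simps perm_graph_def)
  show ?thesis
  proof (cases b)
    case True
    have "inv_into V \<sigma> v \<in> V" "\<sigma> (inv_into V \<sigma> v) = v"
      using \<sigma> v by (auto simp: bij_betw_def inv_into_into f_inv_into_f)
    then show ?thesis
      using isolated_edge_sym isolated_edge_bip_perm_graph[OF \<sigma>, of "inv_into V \<sigma> v"] pv True by metis
  next
    case False
    then show ?thesis
      using isolated_edge_bip_perm_graph[OF \<sigma> v] unfolding pv by auto
  qed
qed

definition dirac_rgraph :: "'v rgraph \<Rightarrow> 'v rgraph measure" where
  "dirac_rgraph g = return (count_space {g}) g"

lemma measure_dirac_rgraph: "measure (dirac_rgraph g) {h \<in> space (dirac_rgraph g). P h} = of_bool (P g)"
proof -
  have "{h \<in> space (dirac_rgraph g). P h} = (if P g then {g} else {})"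
    by (auto simp: dirac_rgraph_def)
  then show ?thesis
    by (simp add: dirac_rgraph_def measure_return)
qed

lemma random_rooted_graph_dirac_rgraph:
  assumes "wf_graph G" "locally_finite G" "connected_rooted (G, x)"
  shows "random_rooted_graph (dirac_rgraph (G, x))"
  using assms unfolding random_rooted_graph_def dirac_rgraph_def by (auto intro!: prob_space_return)

lemma lw_conv_return_pmf:
  assumes "finite (fst G)" "x \<in> fst G"
    and "\<And>v r. v \<in> fst G \<Longrightarrow> rooted_iso (ball (G, v) r) (ball (G, x) r)"
  shows "lw_conv (\<lambda>_. return_pmf G) (ball_prob (dirac_rgraph (G, x)))"
  unfolding lw_conv_def
proof (intro allI impI)
  fix r and H :: "nat rgraph"
  have "rooted_iso (ball (G, v) r) H \<longleftrightarrow> rooted_iso (ball (G, x) r) H" if "v \<in> fst G" for v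
    using rooted_iso_cong_left[OF assms(3)[OF that]] .
  then have "measure (rooted_unif (return_pmf G)) {g. rooted_iso (ball g r) H} = ball_prob (dirac_rgraph (G, x)) r H"
    unfolding ball_prob_def measure_dirac_rgraph using assms(2)
    by (intro measure_rooted_unif_return_pmf[OF assms(1)]) blast+
  then show "(\<lambda>n. measure (rooted_unif (return_pmf G)) {g. rooted_iso (ball g r) H})
      \<longlonglongrightarrow> ball_prob (dirac_rgraph (G, x)) r H"
    by simp
qed

section \<open>The counterexamples\<close>

definition loop_graph :: "nat graph" where
  "loop_graph = perm_graph {0} id"

text \<open>The directed 2-cycle. As a symmetric multiplicity function it is also the undirected
  single edge, which is what every component of G' looks like for both counterexamples.\<close>
definition digon :: "nat graph" where
  "digon = perm_graph {0, 1} (\<lambda>v. 1 - v)"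

lemma bij_betw_digon: "bij_betw (\<lambda>v. 1 - v) {0 :: nat, 1} {0, 1}"
  by (auto simp: bij_betw_def inj_on_def)

lemma wf_graph_loop_graph: "wf_graph loop_graph"
  unfolding loop_graph_def by (rule wf_graph_perm_graph[OF bij_betw_id])

lemma wf_graph_digon: "wf_graph digon"
  unfolding digon_def using bij_betw_digon by (rule wf_graph_perm_graph)

lemma connected_rooted_loop_graph: "connected_rooted (loop_graph, 0)"
  by (rule connected_rootedI[OF wf_graph_loop_graph, where k=0]) (auto simp: loop_graph_def perm_graph_def)

lemma connected_rooted_digon: "connected_rooted (digon, 0)"
  by (rule connected_rootedI[OF wf_graph_digon, where k=1]) (auto simp: digon_def perm_graph_def adj_def)

lemma random_rooted_graph_loop_graph: "random_rooted_graph (dirac_rgraph (loop_graph, 0))"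
proof (rule random_rooted_graph_dirac_rgraph[OF wf_graph_loop_graph _ connected_rooted_loop_graph])
  show "locally_finite loop_graph"
    unfolding loop_graph_def by (intro locally_finite_perm_graph bij_betw_id) auto
qed

lemma random_rooted_graph_digon: "random_rooted_graph (dirac_rgraph (digon, 0))"
proof (rule random_rooted_graph_dirac_rgraph[OF wf_graph_digon _ connected_rooted_digon])
  show "locally_finite digon"
    unfolding digon_def using bij_betw_digon by (intro locally_finite_perm_graph) auto
qed

lemma loop_graph_digon_cases:
  assumes "G \<in> {loop_graph, digon}"
  obtains V \<sigma> where "G = perm_graph V \<sigma>" "finite V" "0 \<in> V" "bij_betw \<sigma> V V"
  using assms bij_betw_id[of "{0 :: nat}"] bij_betw_digon that unfolding loop_graph_def digon_def by blast

lemma finite_random_graph_loop_graph_digon: "G \<in> {loop_graph, digon} \<Longrightarrow> finite_random_graph (return_pmf G)"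
  by (elim loop_graph_digon_cases) (auto intro: finite_random_graph_perm_graph)

lemma isolated_edge_digon: "v \<in> fst digon \<Longrightarrow> isolated_edge (snd digon) v (1 - v)"
  unfolding digon_def perm_graph_def isolated_edge_def adj_def by auto

lemma rooted_iso_ball_digon:
  assumes "v \<in> fst digon"
  shows "rooted_iso (ball (digon, v) r) (ball (digon, 0) r)"
proof -
  have "isolated_edge (snd digon) 0 1"
    using isolated_edge_digon[of 0] by (simp add: digon_def perm_graph_def)
  then have "rooted_iso (ball ((fst digon, snd digon), v) r) (ball ((fst digon, snd digon), 0) r)"
    by (rule rooted_iso_ball_isolated_edge[OF isolated_edge_digon[OF assms]])
  then show ?thesis by simp
qed

lemma ball_loop_graph: "ball (loop_graph, 0) r = (loop_graph, 0)"
proof -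
  have "bset (snd loop_graph) 0 r = {0}"
    by (induction r) (auto simp: loop_graph_def perm_graph_def adj_def)
  then show ?thesis
    unfolding ball_def Let_def by (simp add: loop_graph_def perm_graph_def fun_eq_iff)
qed

lemma rooted_iso_ball_zero_loop_graph:
  assumes "x \<in> fst G"
  shows "rooted_iso (ball (G, x) 0) (loop_graph, 0) \<longleftrightarrow> snd G x x = 1"
proof -
  obtain V E where G: "G = (V, E)" by fastforce
  have "rooted_iso (({x}, \<lambda>v w. if v = x \<and> w = x then E v w else 0), x) (loop_graph, 0) \<longleftrightarrow> E x x = 1"
    unfolding rooted_iso_iff_graph_iso graph_iso_def
    by (auto simp: loop_graph_def perm_graph_def bij_betw_def intro!: exI[of _ "\<lambda>_. 0"])
  then show ?thesis by (simp add: G ball_eq)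
qed

lemma rooted_iso_ball_bip_perm_graph:
  assumes "bij_betw \<sigma> V V" "p \<in> fst (bip (perm_graph V \<sigma>))"
  shows "rooted_iso (ball (bip (perm_graph V \<sigma>), p) r) (ball (digon, 0) r)"
proof -
  obtain q where "isolated_edge (snd (bip (perm_graph V \<sigma>))) p q"
    using ex_isolated_edge_bip_perm_graph[OF assms] by blast
  moreover have "isolated_edge (snd digon) 0 1"
    using isolated_edge_digon[of 0] by (simp add: digon_def perm_graph_def)
  ultimately have "rooted_iso (ball ((fst (bip (perm_graph V \<sigma>)), snd (bip (perm_graph V \<sigma>))), p) r)
      (ball ((fst digon, snd digon), 0) r)"
    by (rule rooted_iso_ball_isolated_edge)
  then show ?thesis by simp
qed

lemma measure_rooted_unif_bip_perm_graph:
  assumes "finite V" "V \<noteq> {}" "bij_betw \<sigma> V V"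
  shows "measure (rooted_unif (map_pmf bip (return_pmf (perm_graph V \<sigma>)))) {g. rooted_iso (ball g r) H}
    = of_bool (rooted_iso (ball (digon, 0) r) H)"
proof -
  have "rooted_iso (ball (bip (perm_graph V \<sigma>), p) r) H \<longleftrightarrow> rooted_iso (ball (digon, 0) r) H"
    if "p \<in> fst (bip (perm_graph V \<sigma>))" for p
    using rooted_iso_cong_left[OF rooted_iso_ball_bip_perm_graph[OF assms(3) that]] .
  then show ?thesis
    unfolding map_return_pmf using assms(1,2)
    by (intro measure_rooted_unif_return_pmf) (auto simp: bip_simps perm_graph_def)
qed

lemma bip_ball_prob_dirac_perm_graph:
  assumes "bij_betw \<sigma> V V" "x \<in> V"
  shows "bip_ball_prob (dirac_rgraph (perm_graph V \<sigma>, x)) r H = of_bool (rooted_iso (ball (digon, 0) r) H)"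
proof -
  have "rooted_iso (ball (bip (perm_graph V \<sigma>), (x, b)) r) H \<longleftrightarrow> rooted_iso (ball (digon, 0) r) H" for b
    using assms(2) rooted_iso_cong_left[OF rooted_iso_ball_bip_perm_graph[OF assms(1), of "(x, b)"]]
    by (simp add: bip_simps perm_graph_def)
  then show ?thesis
    unfolding bip_ball_prob_def measure_dirac_rgraph by simp
qed

lemma measure_rooted_unif_bip_loop_graph_digon:
  assumes "G \<in> {loop_graph, digon}"
  shows "measure (rooted_unif (map_pmf bip (return_pmf G))) {g. rooted_iso (ball g r) H}
     = of_bool (rooted_iso (ball (digon, 0) r) H)"
proof -
  obtain V \<sigma> where G: "G = perm_graph V \<sigma>" and V: "finite V" "0 \<in> V" and \<sigma>: "bij_betw \<sigma> V V"
    using assms by (rule loop_graph_digon_cases)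
  then show ?thesis
    using measure_rooted_unif_bip_perm_graph[OF V(1) _ \<sigma>, of r H] by blast
qed

lemma bip_ball_prob_loop_graph_digon:
  assumes "G \<in> {loop_graph, digon}"
  shows "bip_ball_prob (dirac_rgraph (G, 0)) r H = of_bool (rooted_iso (ball (digon, 0) r) H)"
proof -
  obtain V \<sigma> where G: "G = perm_graph V \<sigma>" and V: "0 \<in> V" and \<sigma>: "bij_betw \<sigma> V V"
    using assms by (rule loop_graph_digon_cases)
  then show ?thesis
    using bip_ball_prob_dirac_perm_graph[OF \<sigma> V, of r H] by blast
qed

lemma measure_rooted_unif_ball_zero_loop_graph:
  assumes "G \<in> {loop_graph, digon}"
  shows "measure (rooted_unif (return_pmf G)) {g. rooted_iso (ball g 0) (loop_graph, 0)} = of_bool (G = loop_graph)"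
proof (rule measure_rooted_unif_return_pmf)
  fix v assume "v \<in> fst G"
  then show "rooted_iso (ball (G, v) 0) (loop_graph, 0) \<longleftrightarrow> G = loop_graph"
    using assms by (subst rooted_iso_ball_zero_loop_graph) (auto simp: loop_graph_def digon_def perm_graph_def)
qed (use assms in \<open>auto simp: loop_graph_def digon_def perm_graph_def\<close>)

lemma not_tendsto_of_bool_even: "\<not> (\<lambda>n. of_bool (even n) :: real) \<longlonglongrightarrow> L"
proof
  assume lim: "(\<lambda>n. of_bool (even n) :: real) \<longlonglongrightarrow> L"
  have "(\<lambda>n. \<bar>of_bool (even n) - of_bool (even (Suc n))\<bar> :: real) \<longlonglongrightarrow> \<bar>L - L\<bar>"
    using lim LIMSEQ_Suc[OF lim] by (intro tendsto_rabs tendsto_diff)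
  moreover have "(\<lambda>n. \<bar>of_bool (even n) - of_bool (even (Suc n))\<bar> :: real) = (\<lambda>_. 1)"
    by auto
  ultimately show False
    by (simp add: LIMSEQ_const_iff)
qed

lemma lw_conv_bip_not_imp_lw_conv:
  "\<exists>Gs :: nat \<Rightarrow> nat graph pmf. (\<forall>n. finite_random_graph (Gs n)) \<and>
     (\<exists>M :: nat rgraph measure. random_rooted_graph M \<and>
        lw_conv (\<lambda>n. map_pmf bip (Gs n)) (bip_ball_prob M)) \<and>
     \<not> (\<exists>M :: nat rgraph measure. random_rooted_graph M \<and> lw_conv Gs (ball_prob M))"
proof (intro exI conjI)
  define Gs where "Gs n = return_pmf (if even n then loop_graph else digon)" for n :: nat
  show "\<forall>n. finite_random_graph (Gs n)"
    unfolding Gs_def using finite_random_graph_loop_graph_digon by simp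
  show "random_rooted_graph (dirac_rgraph (loop_graph, 0))"
    by (rule random_rooted_graph_loop_graph)
  have "measure (rooted_unif (map_pmf bip (Gs n))) {g. rooted_iso (ball g r) H}
      = bip_ball_prob (dirac_rgraph (loop_graph, 0)) r H" for n r H
    unfolding Gs_def
    using measure_rooted_unif_bip_loop_graph_digon[of "if even n then loop_graph else digon" r H]
      bip_ball_prob_loop_graph_digon[of loop_graph r H]
    by simp
  then show "lw_conv (\<lambda>n. map_pmf bip (Gs n)) (bip_ball_prob (dirac_rgraph (loop_graph, 0)))"
    unfolding lw_conv_def by simp
  show "\<not> (\<exists>M :: nat rgraph measure. random_rooted_graph M \<and> lw_conv Gs (ball_prob M))"
  proof
    assume "\<exists>M :: nat rgraph measure. random_rooted_graph M \<and> lw_conv Gs (ball_prob M)"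
    then obtain M :: "nat rgraph measure" where "lw_conv Gs (ball_prob M)"
      by blast
    moreover have "finite_rgraph (loop_graph, 0)"
      using wf_graph_loop_graph by (simp add: finite_rgraph_def loop_graph_def perm_graph_def)
    ultimately have "(\<lambda>n. measure (rooted_unif (Gs n)) {g. rooted_iso (ball g 0) (loop_graph, 0)})
        \<longlonglongrightarrow> ball_prob M 0 (loop_graph, 0)"
      unfolding lw_conv_def by blast
    moreover have "measure (rooted_unif (Gs n)) {g. rooted_iso (ball g 0) (loop_graph, 0)} = of_bool (even n)" for n
      using measure_rooted_unif_ball_zero_loop_graph[of "if even n then loop_graph else digon"]
      by (simp add: Gs_def loop_graph_def digon_def perm_graph_def)
    ultimately show False
      using not_tendsto_of_bool_even by simp
  qed
qed

lemma lw_conv_loop_graph: "lw_conv (\<lambda>_. return_pmf loop_graph) (ball_prob (dirac_rgraph (loop_graph, 0)))"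
proof (rule lw_conv_return_pmf)
  fix v r assume "v \<in> fst loop_graph"
  then have "v = 0" by (simp add: loop_graph_def perm_graph_def)
  then show "rooted_iso (ball (loop_graph, v) r) (ball (loop_graph, 0) r)"
    unfolding \<open>v = 0\<close> ball_loop_graph by (intro rooted_iso_refl) (simp add: loop_graph_def perm_graph_def)
qed (simp_all add: loop_graph_def perm_graph_def)

lemma lw_conv_digon: "lw_conv (\<lambda>_. return_pmf digon) (ball_prob (dirac_rgraph (digon, 0)))"
  using rooted_iso_ball_digon by (intro lw_conv_return_pmf) (auto simp: digon_def perm_graph_def)

lemma ball_prob_loop_graph_neq_digon:
  "ball_prob (dirac_rgraph (loop_graph, 0)) \<noteq> ball_prob (dirac_rgraph (digon, 0))"
proof -
  have loop_prob: "ball_prob (dirac_rgraph (G, 0)) 0 (loop_graph, 0) = of_bool (snd G 0 0 = 1)"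
    if "0 \<in> fst G" for G
    unfolding ball_prob_def measure_dirac_rgraph using rooted_iso_ball_zero_loop_graph[OF that] by simp
  have "ball_prob (dirac_rgraph (loop_graph, 0)) 0 (loop_graph, 0) = 1"
    using loop_prob[of loop_graph] by (simp add: loop_graph_def perm_graph_def)
  moreover have "ball_prob (dirac_rgraph (digon, 0)) 0 (loop_graph, 0) = 0"
    using loop_prob[of digon] by (simp add: digon_def perm_graph_def)
  ultimately show ?thesis
    by (metis zero_neq_one)
qed

lemma bip_ball_prob_not_injective:
  "\<exists>(M1 :: nat rgraph measure) (M2 :: nat rgraph measure). random_rooted_graph M1 \<and> random_rooted_graph M2 \<and>
     (\<exists>Gs1 :: nat \<Rightarrow> nat graph pmf. (\<forall>n. finite_random_graph (Gs1 n)) \<and> lw_conv Gs1 (ball_prob M1)) \<and>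
     (\<exists>Gs2 :: nat \<Rightarrow> nat graph pmf. (\<forall>n. finite_random_graph (Gs2 n)) \<and> lw_conv Gs2 (ball_prob M2)) \<and>
     ball_prob M1 \<noteq> ball_prob M2 \<and> bip_ball_prob M1 = bip_ball_prob M2"
proof -
  have conv: "\<exists>Gs :: nat \<Rightarrow> nat graph pmf. (\<forall>n. finite_random_graph (Gs n)) \<and>
      lw_conv Gs (ball_prob (dirac_rgraph (G, 0)))"
    if "G \<in> {loop_graph, digon}" "lw_conv (\<lambda>_. return_pmf G) (ball_prob (dirac_rgraph (G, 0)))" for G
    using that finite_random_graph_loop_graph_digon by (intro exI[of _ "\<lambda>_. return_pmf G"]) simp
  have "bip_ball_prob (dirac_rgraph (loop_graph, 0)) = bip_ball_prob (dirac_rgraph (digon, 0))"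
    using bip_ball_prob_loop_graph_digon by (intro ext) simp
  then show ?thesis
    using random_rooted_graph_loop_graph random_rooted_graph_digon ball_prob_loop_graph_neq_digon
      conv[OF _ lw_conv_loop_graph] conv[OF _ lw_conv_digon] by blast
qed

theorem proposition1p1:
  shows
   "(\<forall>(Gs :: nat \<Rightarrow> 'v graph pmf) (M :: 'v rgraph measure).
       (\<forall>n. finite_random_graph (Gs n)) \<and> random_rooted_graph M \<and> lw_conv Gs (ball_prob M)
       \<longrightarrow> lw_conv (\<lambda>n. map_pmf bip (Gs n)) (bip_ball_prob M))
  \<and> (\<exists>Gs :: nat \<Rightarrow> nat graph pmf. (\<forall>n. finite_random_graph (Gs n)) \<and>
       (\<exists>M :: nat rgraph measure. random_rooted_graph M \<and>
            lw_conv (\<lambda>n. map_pmf bip (Gs n)) (bip_ball_prob M)) \<and>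
       \<not> (\<exists>M :: nat rgraph measure. random_rooted_graph M \<and> lw_conv Gs (ball_prob M)))
  \<and> (\<exists>(M1 :: nat rgraph measure) (M2 :: nat rgraph measure).
       random_rooted_graph M1 \<and> random_rooted_graph M2 \<and>
       (\<exists>Gs1 :: nat \<Rightarrow> nat graph pmf. (\<forall>n. finite_random_graph (Gs1 n)) \<and> lw_conv Gs1 (ball_prob M1)) \<and>
       (\<exists>Gs2 :: nat \<Rightarrow> nat graph pmf. (\<forall>n. finite_random_graph (Gs2 n)) \<and> lw_conv Gs2 (ball_prob M2)) \<and>
       ball_prob M1 \<noteq> ball_prob M2 \<and>
       bip_ball_prob M1 = bip_ball_prob M2)"
  using lw_conv_bip lw_conv_bip_not_imp_lw_conv bip_ball_prob_not_injective by blast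

end
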